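(* Let $G=(V,E,w)$ be a connected weighted multigraph, let $S\subseteq V$, $x\in S$ and $l\ge0$. Let $V'=V\setminus C_S(l,x)$, $S'=S\setminus C_S(l,x)$ and $\psi=\max_{v\in V}d_G(v,S)$. Then \[ \max_{v\in V'} d_{G(V')}(v,S')\le \psi. \]
   Context: Edge lengths are $d(e)=1/w(e)$; $d_H(u,S)$ is the shortest-path distance in graph $H$ from $u$ to the nearest vertex of $S$, and $G(U)$ is the subgraph induced by $U$. $F(S)=\{(u\to v): (u,v)\in E,\ d_G(u,S)+d(u,v)=d_G(v,S)\}$ is the set of (directed) forward edges induced by $S$. The cone $C_S(l,x)$ is the set of vertices reachable from $x$ by a path in $G$ such that the sum of the lengths of traversed edges that are not traversed as forward edges of $F(S)$ is at most $l$. *)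

theory Defs
  imports "HOL-Analysis.Analysis"
begin

text \<open>A weighted multigraph is given by a vertex set V, an edge set E, an endpoint map
  ends (edge e joins fst (ends e) and snd (ends e); parallel edges allowed) and
  weights w. The length of an edge is d(e) = 1 / w e.\<close>

inductive walk :: "'e set \<Rightarrow> ('e \<Rightarrow> 'v \<times> 'v) \<Rightarrow> ('e \<Rightarrow> real) \<Rightarrow> 'v set \<Rightarrow> 'v \<Rightarrow> 'v \<Rightarrow> real \<Rightarrow> bool"
  for E ends w U where
  nil: "u \<in> U \<Longrightarrow> walk E ends w U u u 0"
| cons: "\<lbrakk>e \<in> E; ends e = (u, y) \<or> ends e = (y, u); u \<in> U; walk E ends w U y v L\<rbrakk>
          \<Longrightarrow> walk E ends w U u v (1 / w e + L)"

text \<open>d_{G(U)}(u,S): shortest-path distance in G(U) from u to the nearest vertex of S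
  (infinite if no vertex of S is reachable).\<close>
definition dist_to :: "'e set \<Rightarrow> ('e \<Rightarrow> 'v \<times> 'v) \<Rightarrow> ('e \<Rightarrow> real) \<Rightarrow> 'v set \<Rightarrow> 'v \<Rightarrow> 'v set \<Rightarrow> ereal" where
  "dist_to E ends w U u S = (INF L \<in> {L. \<exists>s\<in>S. walk E ends w U u s L}. ereal L)"

definition forward :: "'v set \<Rightarrow> 'e set \<Rightarrow> ('e \<Rightarrow> 'v \<times> 'v) \<Rightarrow> ('e \<Rightarrow> real) \<Rightarrow> 'v set \<Rightarrow> 'e \<Rightarrow> 'v \<Rightarrow> 'v \<Rightarrow> bool" where
  "forward V E ends w S e u y \<longleftrightarrow> e \<in> E \<and> (ends e = (u, y) \<or> ends e = (y, u)) \<and>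
     dist_to E ends w V u S + ereal (1 / w e) = dist_to E ends w V y S"

inductive cone_walk :: "'v set \<Rightarrow> 'e set \<Rightarrow> ('e \<Rightarrow> 'v \<times> 'v) \<Rightarrow> ('e \<Rightarrow> real) \<Rightarrow> 'v set \<Rightarrow> 'v \<Rightarrow> 'v \<Rightarrow> real \<Rightarrow> bool"
  for V E ends w S x where
  nil: "x \<in> V \<Longrightarrow> cone_walk V E ends w S x x 0"
| step: "\<lbrakk>cone_walk V E ends w S x u c; e \<in> E; ends e = (u, y) \<or> ends e = (y, u); y \<in> V\<rbrakk>
          \<Longrightarrow> cone_walk V E ends w S x y
                (c + (if forward V E ends w S e u y then 0 else 1 / w e))"

definition cone :: "'v set \<Rightarrow> 'e set \<Rightarrow> ('e \<Rightarrow> 'v \<times> 'v) \<Rightarrow> ('e \<Rightarrow> real) \<Rightarrow> 'v set \<Rightarrow> real \<Rightarrow> 'v \<Rightarrow> 'v set" where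
  "cone V E ends w S l x = {v. \<exists>c. cone_walk V E ends w S x v c \<and> c \<le> l}"

end

theory Submission
  imports Defs
begin

text \<open>Let u lie outside the cone C. A shortest path from u to S is a chain of edges y \<rightarrow> u
  with d(u,S) = d(y,S) + d(e), i.e. each edge, read towards u, is a forward edge of F(S).
  Since forward edges cost nothing inside a cone walk, C is closed under them, so a vertex
  preceding u on that path can never lie in C: the whole shortest path, including its endpoint
  in S, avoids C. Hence d_{G(V')}(u,S') \<le> d_G(u,S) \<le> \<psi>.\<close>

lemma walk_length_nonneg:
  assumes "walk E ends w U u v L" and "\<forall>e\<in>E. w e > 0"
  shows "0 \<le> L"
  using assms by (induction rule: walk.induct) auto

lemma walk_start_in: "walk E ends w U u v L \<Longrightarrow> u \<in> U"
  by (induction rule: walk.induct) auto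

lemma dist_to_nonneg:
  assumes "\<forall>e\<in>E. w e > 0"
  shows "0 \<le> dist_to E ends w U u S"
  unfolding dist_to_def by (rule INF_greatest) (use walk_length_nonneg assms in auto)

lemma dist_to_le_walk:
  assumes "walk E ends w U u s L" and "s \<in> S"
  shows "dist_to E ends w U u S \<le> ereal L"
  unfolding dist_to_def by (rule INF_lower2[of L]) (use assms in auto)

lemma dist_to_le_edge:
  assumes "\<forall>e\<in>E. w e > 0" and "e \<in> E" and "ends e = (u, y) \<or> ends e = (y, u)" and "u \<in> U"
  shows "dist_to E ends w U u S \<le> ereal (1 / w e) + dist_to E ends w U y S"
proof -
  define A where "A = {L. \<exists>s\<in>S. walk E ends w U y s L}"
  have "dist_to E ends w U u S \<le> (INF L\<in>A. ereal (1 / w e) + ereal L)"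
  proof (rule INF_greatest)
    fix L assume "L \<in> A"
    then obtain s where "s \<in> S" "walk E ends w U y s L" unfolding A_def by auto
    with assms have "walk E ends w U u s (1 / w e + L)" by (auto intro: walk.cons)
    with \<open>s \<in> S\<close> show "dist_to E ends w U u S \<le> ereal (1 / w e) + ereal L"
      using dist_to_le_walk by fastforce
  qed
  also have "\<dots> = ereal (1 / w e) + dist_to E ends w U y S"
  proof (cases "A = {}")
    case False
    then show ?thesis
      unfolding dist_to_def A_def[symmetric]
      by (intro INF_ereal_add_right) (use walk_length_nonneg assms(1) in \<open>auto simp: A_def\<close>)
  qed (simp add: dist_to_def A_def[symmetric] top_ereal_def)
  finally show ?thesis .
qed

lemma dist_to_eq_via_neighbour:
  assumes "finite E" and "\<forall>e\<in>E. w e > 0"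
    and "walk E ends w U u s L" and "s \<in> S" and "u \<notin> S"
  obtains e y where "e \<in> E" "ends e = (u, y) \<or> ends e = (y, u)" "y \<in> U"
    "dist_to E ends w U u S = ereal (1 / w e) + dist_to E ends w U y S"
proof -
  define N where "N = {(e, y). e \<in> E \<and> (ends e = (u, y) \<or> ends e = (y, u)) \<and> y \<in> U}"
  define f where "f = (\<lambda>(e, y). ereal (1 / w e) + dist_to E ends w U y S)"
  have "N \<subseteq> (\<lambda>e. (e, fst (ends e))) ` E \<union> (\<lambda>e. (e, snd (ends e))) ` E"
    unfolding N_def by force
  then have "finite N" using assms(1) finite_subset by blast
  have "N \<noteq> {}"
    using assms(3-5) by (cases rule: walk.cases) (auto simp: N_def dest: walk.cases)
  obtain a where "a \<in> N" and a_min: "\<forall>b\<in>N. f a \<le> f b"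
  proof -
    have "Min (f ` N) \<in> f ` N" using \<open>finite N\<close> \<open>N \<noteq> {}\<close> by simp
    then obtain a where "a \<in> N" "f a = Min (f ` N)" by auto
    with \<open>finite N\<close> show ?thesis using that by simp
  qed
  obtain e y where a: "a = (e, y)" by fastforce
  have "f a \<le> dist_to E ends w U u S"
    unfolding dist_to_def
  proof (rule INF_greatest)
    fix L assume "L \<in> {L. \<exists>s\<in>S. walk E ends w U u s L}"
    then obtain s where "s \<in> S" and walk_u: "walk E ends w U u s L" by auto
    from walk_u show "f a \<le> ereal L"
    proof (cases rule: walk.cases)
      case (cons e' y' L')
      then have "(e', y') \<in> N" by (auto simp: N_def dest: walk.cases)
      then have "f a \<le> ereal (1 / w e') + dist_to E ends w U y' S"
        using a_min by (auto simp: f_def)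
      also have "\<dots> \<le> ereal (1 / w e') + ereal L'"
        using dist_to_le_walk[OF cons(5) \<open>s \<in> S\<close>] by (intro add_left_mono)
      finally show ?thesis using cons by simp
    qed (use \<open>s \<in> S\<close> assms(5) in auto)
  qed
  moreover have "dist_to E ends w U u S \<le> f a"
    using \<open>a \<in> N\<close> assms(2) walk_start_in[OF assms(3)]
    by (auto simp: a f_def N_def intro!: dist_to_le_edge)
  ultimately show ?thesis
    using that \<open>a \<in> N\<close> by (auto simp: a f_def N_def)
qed

lemma cone_closed_forward:
  assumes "y \<in> cone V E ends w S l x" and "forward V E ends w S e y u" and "u \<in> V"
  shows "u \<in> cone V E ends w S l x"
proof -
  obtain c where "cone_walk V E ends w S x y c" "c \<le> l"
    using assms(1) unfolding cone_def by auto
  then have "cone_walk V E ends w S x u c"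
    using cone_walk.step[of V E ends w S x y c e u] assms(2,3) by (simp add: forward_def)
  with \<open>c \<le> l\<close> show ?thesis unfolding cone_def by auto
qed

lemma dist_to_diff_forward_closed_le:
  assumes "finite V" and "finite E" and "\<forall>e\<in>E. w e > 0"
    and reach: "\<forall>v\<in>V. \<exists>s\<in>S. \<exists>L. walk E ends w V v s L"
    and closed: "\<And>e y u. y \<in> C \<Longrightarrow> forward V E ends w S e y u \<Longrightarrow> u \<in> V \<Longrightarrow> u \<in> C"
    and "u \<in> V - C"
  shows "dist_to E ends w (V - C) u (S - C) \<le> dist_to E ends w V u S"
  using assms(6)
proof (induction u rule: measure_induct_rule[where
      f = "\<lambda>u. card {v \<in> V. dist_to E ends w V v S < dist_to E ends w V u S}"])
  case (less u)
  define D where "D v = dist_to E ends w V v S" for v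
  show ?case
  proof (cases "u \<in> S")
    case True
    with less.prems have "dist_to E ends w (V - C) u (S - C) \<le> ereal 0"
      by (intro dist_to_le_walk[of E ends w "V - C" u u]) (auto intro: walk.nil)
    also have "\<dots> \<le> D u"
      unfolding D_def using dist_to_nonneg[OF assms(3)] by (simp add: zero_ereal_def)
    finally show ?thesis unfolding D_def .
  next
    case False
    obtain s L where "s \<in> S" "walk E ends w V u s L" using reach less.prems by blast
    with False obtain e y where e: "e \<in> E" "ends e = (u, y) \<or> ends e = (y, u)" "y \<in> V"
      and D_u: "D u = ereal (1 / w e) + D y"
      using dist_to_eq_via_neighbour[OF assms(2,3)] unfolding D_def by metis
    have "forward V E ends w S e y u"
      using e D_u by (auto simp: forward_def D_def add.commute)
    then have "y \<notin> C" using closed less.prems by blast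
    obtain s' L' where "s' \<in> S" "walk E ends w V y s' L'" using reach e(3) by blast
    then have "D y < \<infinity>" unfolding D_def using dist_to_le_walk by fastforce
    moreover have "0 < w e" using assms(3) e(1) by blast
    ultimately have "D y < D u"
      using D_u dist_to_nonneg[OF assms(3), of ends V y S] by (cases "D y") (auto simp: D_def)
    then have "card {v \<in> V. D v < D y} < card {v \<in> V. D v < D u}"
      using assms(1) e(3) by (intro psubset_card_mono) auto
    then have IH: "dist_to E ends w (V - C) y (S - C) \<le> D y"
      using less.IH \<open>y \<in> V\<close> \<open>y \<notin> C\<close> unfolding D_def by blast
    have "dist_to E ends w (V - C) u (S - C)
        \<le> ereal (1 / w e) + dist_to E ends w (V - C) y (S - C)"
      using assms(3) e(1,2) less.prems by (rule dist_to_le_edge)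
    also have "\<dots> \<le> D u" using IH D_u by (simp add: add_left_mono)
    finally show ?thesis unfolding D_def .
  qed
qed

theorem mainTheorem8:
  fixes V :: "'v set" and E :: "'e set" and ends :: "'e \<Rightarrow> 'v \<times> 'v"
    and w :: "'e \<Rightarrow> real" and S :: "'v set" and x :: 'v and l :: real
  assumes "finite V" and "finite E"
    and "\<forall>e\<in>E. fst (ends e) \<in> V \<and> snd (ends e) \<in> V"
    and "\<forall>e\<in>E. w e > 0"
    and "\<forall>u\<in>V. \<forall>v\<in>V. \<exists>L. walk E ends w V u v L"
    and "S \<subseteq> V" and "x \<in> S" and "l \<ge> 0"
  shows "(SUP v \<in> V - cone V E ends w S l x.
            dist_to E ends w (V - cone V E ends w S l x) v (S - cone V E ends w S l x))
         \<le> (SUP v \<in> V. dist_to E ends w V v S)"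
proof (rule SUP_least)
  fix u assume u: "u \<in> V - cone V E ends w S l x"
  have "\<forall>v\<in>V. \<exists>s\<in>S. \<exists>L. walk E ends w V v s L"
    using assms(5-7) by blast
  then have "dist_to E ends w (V - cone V E ends w S l x) u (S - cone V E ends w S l x)
      \<le> dist_to E ends w V u S"
    using assms(1,2,4) u cone_closed_forward by (intro dist_to_diff_forward_closed_le)
  also have "\<dots> \<le> (SUP v \<in> V. dist_to E ends w V v S)"
    using u by (auto intro: SUP_upper)
  finally show "dist_to E ends w (V - cone V E ends w S l x) u (S - cone V E ends w S l x)
      \<le> (SUP v \<in> V. dist_to E ends w V v S)" .
qed

end
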